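(* Let $L=\prod_i L_i$ be a product of fields with an action of a group $G$ by ring automorphisms, such that $G$ acts transitively on the set $\{e_i\}_i$ of principal idempotents of $L$. Let $M$ be a module over the skew group ring $L\rtimes G$ such that the natural map $M\to\prod_i e_i\cdot M$, $m\mapsto(e_i\cdot m)_i$, is an isomorphism and $\dim_{L_i}e_i\cdot M<\infty$ for some $i$. Then $M$ is free of finite rank over $L$.
   Context: The principal idempotents of $L=\prod_iL_i$ are the elements $e_i$ with $1$ in the $i$-th coordinate and $0$ elsewhere; any ring automorphism of $L$ permutes them. *)

theory Defs
  imports "HOL-Algebra.Algebra"
begin

definition prod_ring :: "'i set \<Rightarrow> ('i \<Rightarrow> 'a ring) \<Rightarrow> ('i \<Rightarrow> 'a) ring" where
  "prod_ring I R =
    \<lparr> carrier = (\<Pi>\<^sub>E i\<in>I. carrier (R i)),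
      monoid.mult = (\<lambda>x y. \<lambda>i\<in>I. x i \<otimes>\<^bsub>R i\<^esub> y i),
      monoid.one = (\<lambda>i\<in>I. \<one>\<^bsub>R i\<^esub>),
      ring.zero = (\<lambda>i\<in>I. \<zero>\<^bsub>R i\<^esub>),
      ring.add = (\<lambda>x y. \<lambda>i\<in>I. x i \<oplus>\<^bsub>R i\<^esub> y i) \<rparr>"

definition prin_idem :: "'i set \<Rightarrow> ('i \<Rightarrow> 'a ring) \<Rightarrow> 'i \<Rightarrow> ('i \<Rightarrow> 'a)" where
  "prin_idem I R i = (\<lambda>j\<in>I. if j = i then \<one>\<^bsub>R j\<^esub> else \<zero>\<^bsub>R j\<^esub>)"

text \<open>Embedding of the factor R i into L (coordinate i, zero elsewhere);
  through it e_i M becomes an R i - vector space.\<close>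
definition coord_incl :: "'i set \<Rightarrow> ('i \<Rightarrow> 'a ring) \<Rightarrow> 'i \<Rightarrow> 'a \<Rightarrow> ('i \<Rightarrow> 'a)" where
  "coord_incl I R i a = (\<lambda>j\<in>I. if j = i then a else \<zero>\<^bsub>R j\<^esub>)"

definition finite_basis ::
    "('k, 'c) ring_scheme \<Rightarrow> ('k \<Rightarrow> 'm \<Rightarrow> 'm) \<Rightarrow> ('m, 'd) ring_scheme \<Rightarrow> 'm set \<Rightarrow> 'm set \<Rightarrow> bool" where
  "finite_basis K s M V B \<longleftrightarrow> finite B \<and> B \<subseteq> V \<and>
     (\<forall>v\<in>V. \<exists>!c. c \<in> (B \<rightarrow>\<^sub>E carrier K) \<and> v = (\<Oplus>\<^bsub>M\<^esub>b\<in>B. s (c b) b))"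

definition free_finite_rank :: "('k, 'c) ring_scheme \<Rightarrow> ('k, 'm, 'd) module_scheme \<Rightarrow> bool" where
  "free_finite_rank L M \<longleftrightarrow> (\<exists>B. finite_basis L (smult M) M (carrier M) B)"

end

theory Submission
  imports Defs
begin

text \<open>
  If \<open>g \<in> G\<close> moves the idempotent \<open>e\<^sub>i\<close> to \<open>e\<^sub>j\<close>, then \<open>\<phi> g\<close> restricts to a ring
  isomorphism \<open>L\<^sub>i \<cong> L\<^sub>j\<close>, and \<open>\<psi> g\<close> is a bijection \<open>e\<^sub>i M \<rightarrow> e\<^sub>j M\<close> that is semilinear along it;
  hence it carries an \<open>L\<^sub>i\<close>-basis \<open>(b\<^sub>k)\<close> of \<open>e\<^sub>i M\<close> to an \<open>L\<^sub>j\<close>-basis \<open>(\<psi> g b\<^sub>k)\<close> of \<open>e\<^sub>j M\<close>.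
  By transitivity every component receives such a basis, indexed by the same finite set.
  Through \<open>M \<cong> \<Prod>\<^sub>j e\<^sub>j M\<close>, the elements whose components are \<open>(\<psi> g\<^sub>j b\<^sub>k)\<^sub>j\<close> then form an
  \<open>L\<close>-basis of \<open>M\<close>: a coefficient in \<open>L = \<Prod>\<^sub>j L\<^sub>j\<close> is just a choice of coefficients in every
  component.
\<close>

definition basis_family ::
    "('k, 'c) ring_scheme \<Rightarrow> ('k \<Rightarrow> 'm \<Rightarrow> 'm) \<Rightarrow> ('m, 'd) ring_scheme \<Rightarrow> 'm set \<Rightarrow> 'b set
      \<Rightarrow> ('b \<Rightarrow> 'm) \<Rightarrow> bool" where
  "basis_family K s M V B w \<longleftrightarrow> w \<in> B \<rightarrow> V \<and>
     (\<forall>v\<in>V. \<exists>!c. c \<in> B \<rightarrow>\<^sub>E carrier K \<and> v = (\<Oplus>\<^bsub>M\<^esub>b\<in>B. s (c b) (w b)))"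

lemma basis_familyD:
  assumes "basis_family K s M V B w"
  shows basis_family_closed: "w \<in> B \<rightarrow> V"
    and basis_family_unique_coeffs:
      "v \<in> V \<Longrightarrow> \<exists>!c. c \<in> B \<rightarrow>\<^sub>E carrier K \<and> v = (\<Oplus>\<^bsub>M\<^esub>b\<in>B. s (c b) (w b))"
  using assms unfolding basis_family_def by blast+

lemma basis_family_of_finite_basis:
  "finite_basis K s M V B \<Longrightarrow> basis_family K s M V B (\<lambda>b. b)"
  by (auto simp: finite_basis_def basis_family_def)

lemma finite_basis_image:
  assumes M: "abelian_monoid M" and fin: "finite B" and inj: "inj_on w B"
    and V: "V \<subseteq> carrier M"
    and s_closed: "\<And>a x. a \<in> carrier K \<Longrightarrow> x \<in> V \<Longrightarrow> s a x \<in> carrier M"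
    and basis: "basis_family K s M V B w"
  shows "finite_basis K s M V (w ` B)"
proof -
  interpret abelian_monoid M by (rule M)
  have w: "w \<in> B \<rightarrow> V" by (rule basis_family_closed[OF basis])
  have pullback_closed: "restrict (\<lambda>b. c (w b)) B \<in> B \<rightarrow>\<^sub>E carrier K"
    if "c \<in> w ` B \<rightarrow>\<^sub>E carrier K" for c
    using that by auto
  have pullback_sum:
    "(\<Oplus>\<^bsub>M\<^esub>x\<in>w ` B. s (c x) x) = (\<Oplus>\<^bsub>M\<^esub>b\<in>B. s (restrict (\<lambda>b. c (w b)) B b) (w b))"
    if c: "c \<in> w ` B \<rightarrow>\<^sub>E carrier K" for c
  proof -
    have "(\<Oplus>\<^bsub>M\<^esub>x\<in>w ` B. s (c x) x) = (\<Oplus>\<^bsub>M\<^esub>b\<in>B. s (c (w b)) (w b))"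
      using c w by (intro finsum_reindex[OF _ inj]) (auto intro!: s_closed)
    also have "\<dots> = (\<Oplus>\<^bsub>M\<^esub>b\<in>B. s (restrict (\<lambda>b. c (w b)) B b) (w b))"
      using c w by (intro finsum_cong') (auto intro!: s_closed)
    finally show ?thesis .
  qed
  have "\<exists>!c. c \<in> w ` B \<rightarrow>\<^sub>E carrier K \<and> v = (\<Oplus>\<^bsub>M\<^esub>x\<in>w ` B. s (c x) x)" if v: "v \<in> V" for v
  proof (rule ex_ex1I)
    obtain c where c: "c \<in> B \<rightarrow>\<^sub>E carrier K" and v_eq: "v = (\<Oplus>\<^bsub>M\<^esub>b\<in>B. s (c b) (w b))"
      using basis_family_unique_coeffs[OF basis v] by blast
    define c' where "c' = (\<lambda>x\<in>w ` B. c (the_inv_into B w x))"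
    have c': "c' \<in> w ` B \<rightarrow>\<^sub>E carrier K"
      using c by (auto simp: c'_def the_inv_into_f_f[OF inj])
    have "restrict (\<lambda>b. c' (w b)) B = c"
      using c by (auto simp: c'_def the_inv_into_f_f[OF inj] PiE_iff extensional_def)
    then show "\<exists>c. c \<in> w ` B \<rightarrow>\<^sub>E carrier K \<and> v = (\<Oplus>\<^bsub>M\<^esub>x\<in>w ` B. s (c x) x)"
      using c' pullback_sum[OF c'] v_eq by metis
  next
    fix c1 c2
    assume c1: "c1 \<in> w ` B \<rightarrow>\<^sub>E carrier K \<and> v = (\<Oplus>\<^bsub>M\<^esub>x\<in>w ` B. s (c1 x) x)"
      and c2: "c2 \<in> w ` B \<rightarrow>\<^sub>E carrier K \<and> v = (\<Oplus>\<^bsub>M\<^esub>x\<in>w ` B. s (c2 x) x)"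
    have eq: "restrict (\<lambda>b. c1 (w b)) B = restrict (\<lambda>b. c2 (w b)) B"
      using basis_family_unique_coeffs[OF basis v] c1 c2 pullback_closed pullback_sum by metis
    have "c1 (w b) = c2 (w b)" if "b \<in> B" for b
      using fun_cong[OF eq, of b] that by simp
    then show "c1 = c2"
      using c1 c2 by (intro PiE_ext[of _ "w ` B"]) auto
  qed
  then show ?thesis
    using fin w V unfolding finite_basis_def by blast
qed

lemma (in abelian_group) finsum_additive:
  assumes h: "h \<in> carrier G \<rightarrow> carrier G"
    and additive: "\<And>x y. x \<in> carrier G \<Longrightarrow> y \<in> carrier G \<Longrightarrow> h (x \<oplus> y) = h x \<oplus> h y"
    and f: "f \<in> A \<rightarrow> carrier G"
  shows "h (\<Oplus>a\<in>A. f a) = (\<Oplus>a\<in>A. h (f a))"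
proof -
  have "h \<zero> \<in> carrier G" using h by blast
  then have "h \<zero> = \<zero>"
    using additive[of \<zero> \<zero>] by simp
  then show ?thesis
    using f
  proof (induction A rule: infinite_finite_induct)
    case (insert a A)
    then have "f a \<in> carrier G" "h (f a) \<in> carrier G"
      and "f \<in> A \<rightarrow> carrier G" "(\<lambda>x. h (f x)) \<in> A \<rightarrow> carrier G"
      using h by auto
    with insert h show ?case
      by (auto simp: finsum_insert additive finsum_closed)
  qed (simp_all add: finsum_infinite)
qed

lemma (in abelian_group) finsum_semilinear:
  assumes h: "h \<in> carrier G \<rightarrow> carrier G"
    and additive: "\<And>x y. x \<in> carrier G \<Longrightarrow> y \<in> carrier G \<Longrightarrow> h (x \<oplus> y) = h x \<oplus> h y"
    and s_closed: "\<And>a x. a \<in> carrier K \<Longrightarrow> x \<in> V \<Longrightarrow> s a x \<in> carrier G"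
    and semilinear: "\<And>a x. a \<in> carrier K \<Longrightarrow> x \<in> V \<Longrightarrow> h (s a x) = s' (f a) (h x)"
    and c: "c \<in> B \<rightarrow> carrier K" and w: "w \<in> B \<rightarrow> V"
  shows "h (\<Oplus>b\<in>B. s (c b) (w b)) = (\<Oplus>b\<in>B. s' (f (c b)) (h (w b)))"
proof -
  have terms: "(\<lambda>b. s (c b) (w b)) \<in> B \<rightarrow> carrier G"
    using c w by (auto intro!: s_closed)
  have "h (\<Oplus>b\<in>B. s (c b) (w b)) = (\<Oplus>b\<in>B. h (s (c b) (w b)))"
    by (rule finsum_additive[OF h additive terms])
  also have "\<dots> = (\<Oplus>b\<in>B. s' (f (c b)) (h (w b)))"
  proof (rule finsum_cong')
    have "s' (f (c b)) (h (w b)) = h (s (c b) (w b))" if "b \<in> B" for b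
      using that c w by (auto intro!: semilinear[symmetric])
    then show "(\<lambda>b. s' (f (c b)) (h (w b))) \<in> B \<rightarrow> carrier G"
      using terms h by auto
  qed (use c w in \<open>auto intro!: semilinear\<close>)
  finally show ?thesis .
qed

lemma basis_family_semilinear_image:
  assumes M: "abelian_group M"
    and h_closed: "h \<in> carrier M \<rightarrow> carrier M" and h_inj: "inj_on h (carrier M)"
    and h_add: "\<And>x y. x \<in> carrier M \<Longrightarrow> y \<in> carrier M \<Longrightarrow> h (x \<oplus>\<^bsub>M\<^esub> y) = h x \<oplus>\<^bsub>M\<^esub> h y"
    and V: "V \<subseteq> carrier M" and h_V: "h ` V = V'"
    and f: "bij_betw f (carrier K) (carrier K')"
    and s_closed: "\<And>a x. a \<in> carrier K \<Longrightarrow> x \<in> V \<Longrightarrow> s a x \<in> carrier M"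
    and semilinear: "\<And>a x. a \<in> carrier K \<Longrightarrow> x \<in> V \<Longrightarrow> h (s a x) = s' (f a) (h x)"
    and basis: "basis_family K s M V B w"
  shows "basis_family K' s' M V' B (\<lambda>b. h (w b))"
proof -
  interpret abelian_group M by (rule M)
  have w: "w \<in> B \<rightarrow> V" by (rule basis_family_closed[OF basis])
  have image_lincomb:
    "h (\<Oplus>\<^bsub>M\<^esub>b\<in>B. s (c b) (w b)) = (\<Oplus>\<^bsub>M\<^esub>b\<in>B. s' (f (c b)) (h (w b)))"
    if "c \<in> B \<rightarrow> carrier K" for c
    using h_closed h_add s_closed semilinear that w by (rule finsum_semilinear)
  have image_term_closed: "s' (f a) (h x) \<in> carrier M" if "a \<in> carrier K" "x \<in> V" for a x
    using that h_closed s_closed by (auto simp flip: semilinear)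
  have "\<exists>!c'. c' \<in> B \<rightarrow>\<^sub>E carrier K' \<and> v' = (\<Oplus>\<^bsub>M\<^esub>b\<in>B. s' (c' b) (h (w b)))"
    if v': "v' \<in> V'" for v'
  proof -
    obtain v where v: "v \<in> V" and v'_eq: "v' = h v" using v' h_V by blast
    let ?pull = "\<lambda>c'. restrict (\<lambda>b. inv_into (carrier K) f (c' b)) B"
    have f_pull: "f (?pull c' b) = c' b" if "c' \<in> B \<rightarrow>\<^sub>E carrier K'" "b \<in> B" for c' b
      using that f unfolding bij_betw_def by (auto intro!: f_inv_into_f)
    have pullback: "?pull c' \<in> B \<rightarrow>\<^sub>E carrier K \<and> v = (\<Oplus>\<^bsub>M\<^esub>b\<in>B. s (?pull c' b) (w b))"
      if c': "c' \<in> B \<rightarrow>\<^sub>E carrier K' \<and> v' = (\<Oplus>\<^bsub>M\<^esub>b\<in>B. s' (c' b) (h (w b)))" for c'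
    proof
      show d: "?pull c' \<in> B \<rightarrow>\<^sub>E carrier K"
        using c' f unfolding bij_betw_def by (auto intro!: inv_into_into)
      have comb: "(\<Oplus>\<^bsub>M\<^esub>b\<in>B. s (?pull c' b) (w b)) \<in> carrier M"
        using d w by (auto intro!: finsum_closed s_closed)
      have "v' = (\<Oplus>\<^bsub>M\<^esub>b\<in>B. s' (f (?pull c' b)) (h (w b)))"
        using c' d w f_pull by (auto intro!: finsum_cong' image_term_closed)
      also have "\<dots> = h (\<Oplus>\<^bsub>M\<^esub>b\<in>B. s (?pull c' b) (w b))"
        using d by (intro image_lincomb[symmetric]) auto
      finally have "h v = h (\<Oplus>\<^bsub>M\<^esub>b\<in>B. s (?pull c' b) (w b))"
        using v'_eq by simp
      then show "v = (\<Oplus>\<^bsub>M\<^esub>b\<in>B. s (?pull c' b) (w b))"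
        using inj_onD[OF h_inj _ _ comb] v V by blast
    qed
    show ?thesis
    proof (rule ex_ex1I)
      obtain c where c: "c \<in> B \<rightarrow>\<^sub>E carrier K" and v_eq: "v = (\<Oplus>\<^bsub>M\<^esub>b\<in>B. s (c b) (w b))"
        using basis_family_unique_coeffs[OF basis v] by blast
      have "restrict (\<lambda>b. f (c b)) B \<in> B \<rightarrow>\<^sub>E carrier K'"
        using c f unfolding bij_betw_def by auto
      moreover have "v' = (\<Oplus>\<^bsub>M\<^esub>b\<in>B. s' (restrict (\<lambda>b. f (c b)) B b) (h (w b)))"
        unfolding v'_eq v_eq using c w
        by (subst image_lincomb) (auto intro!: finsum_cong' image_term_closed)
      ultimately show "\<exists>c'. c' \<in> B \<rightarrow>\<^sub>E carrier K' \<and> v' = (\<Oplus>\<^bsub>M\<^esub>b\<in>B. s' (c' b) (h (w b)))"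
        by blast
    next
      fix c1 c2
      assume c1: "c1 \<in> B \<rightarrow>\<^sub>E carrier K' \<and> v' = (\<Oplus>\<^bsub>M\<^esub>b\<in>B. s' (c1 b) (h (w b)))"
        and c2: "c2 \<in> B \<rightarrow>\<^sub>E carrier K' \<and> v' = (\<Oplus>\<^bsub>M\<^esub>b\<in>B. s' (c2 b) (h (w b)))"
      have pull_eq: "?pull c1 = ?pull c2"
        using basis_family_unique_coeffs[OF basis v] pullback[OF c1] pullback[OF c2] by blast
      have "c1 b = c2 b" if "b \<in> B" for b
        using f_pull[OF conjunct1[OF c1] that] f_pull[OF conjunct1[OF c2] that] pull_eq by metis
      then show "c1 = c2"
        using c1 c2 by (intro PiE_ext[of _ B]) auto
    qed
  qed
  then show ?thesis
    using w h_V unfolding basis_family_def by blast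
qed

lemma carrier_prod_ring: "carrier (prod_ring I R) = (\<Pi>\<^sub>E i\<in>I. carrier (R i))"
  by (simp add: prod_ring_def)

lemma mult_prod_ring: "x \<otimes>\<^bsub>prod_ring I R\<^esub> y = (\<lambda>i\<in>I. x i \<otimes>\<^bsub>R i\<^esub> y i)"
  by (simp add: prod_ring_def)

lemma coord_incl_same: "i \<in> I \<Longrightarrow> coord_incl I R i a i = a"
  by (simp add: coord_incl_def)

lemma prin_idem_eq_coord_incl: "prin_idem I R i = coord_incl I R i \<one>\<^bsub>R i\<^esub>"
  by (auto simp: prin_idem_def coord_incl_def)

locale ring_family =
  fixes I :: "'i set" and R :: "'i \<Rightarrow> 'a ring"
  assumes rings: "\<And>i. i \<in> I \<Longrightarrow> ring (R i)"
begin

lemma coord_incl_closed: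
  "i \<in> I \<Longrightarrow> a \<in> carrier (R i) \<Longrightarrow> coord_incl I R i a \<in> carrier (prod_ring I R)"
  using rings by (auto simp: carrier_prod_ring coord_incl_def ring.ring_simprules(2))

lemma prin_idem_closed: "i \<in> I \<Longrightarrow> prin_idem I R i \<in> carrier (prod_ring I R)"
  using rings by (simp add: prin_idem_eq_coord_incl coord_incl_closed ring.ring_simprules(6))

lemma prin_idem_mult:
  assumes i: "i \<in> I" and v: "v \<in> carrier (prod_ring I R)"
  shows prin_idem_mult_left: "prin_idem I R i \<otimes>\<^bsub>prod_ring I R\<^esub> v = coord_incl I R i (v i)"
    and prin_idem_mult_right: "v \<otimes>\<^bsub>prod_ring I R\<^esub> prin_idem I R i = coord_incl I R i (v i)"
proof -
  interpret Ri: ring "R i" by (rule rings[OF i])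
  have "(prin_idem I R i \<otimes>\<^bsub>prod_ring I R\<^esub> v) k = coord_incl I R i (v i) k \<and>
        (v \<otimes>\<^bsub>prod_ring I R\<^esub> prin_idem I R i) k = coord_incl I R i (v i) k" for k
  proof (cases "k \<in> I")
    case True
    interpret ring "R k" by (rule rings[OF True])
    have "v k \<in> carrier (R k)" using v True by (auto simp: carrier_prod_ring)
    then show ?thesis
      using True Ri.l_one Ri.r_one by (auto simp: mult_prod_ring prin_idem_def coord_incl_def)
  qed (simp add: mult_prod_ring coord_incl_def)
  then show "prin_idem I R i \<otimes>\<^bsub>prod_ring I R\<^esub> v = coord_incl I R i (v i)"
    and "v \<otimes>\<^bsub>prod_ring I R\<^esub> prin_idem I R i = coord_incl I R i (v i)"
    by auto
qed

lemma ring_hom_coord_incl: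
  assumes ij: "i \<in> I" "j \<in> I" and \<sigma>: "\<sigma> \<in> ring_hom (prod_ring I R) (prod_ring I R)"
    and \<sigma>_idem: "\<sigma> (prin_idem I R i) = prin_idem I R j" and a: "a \<in> carrier (R i)"
  shows "\<sigma> (coord_incl I R i a) = coord_incl I R j (\<sigma> (coord_incl I R i a) j)"
proof -
  let ?x = "coord_incl I R i a"
  have x: "?x \<in> carrier (prod_ring I R)" by (rule coord_incl_closed[OF ij(1) a])
  have "?x = ?x \<otimes>\<^bsub>prod_ring I R\<^esub> prin_idem I R i"
    using prin_idem_mult_right[OF ij(1) x] by (simp add: coord_incl_same[OF ij(1)])
  then have "\<sigma> ?x = \<sigma> ?x \<otimes>\<^bsub>prod_ring I R\<^esub> prin_idem I R j"
    using ring_hom_mult[OF \<sigma> x prin_idem_closed[OF ij(1)]] \<sigma>_idem by simp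
  also have "\<dots> = coord_incl I R j (\<sigma> ?x j)"
    by (rule prin_idem_mult_right[OF ij(2) ring_hom_closed[OF \<sigma> x]])
  finally show ?thesis .
qed

lemma bij_betw_coord_transfer:
  assumes ij: "i \<in> I" "j \<in> I"
    and \<sigma>: "\<sigma> \<in> ring_hom (prod_ring I R) (prod_ring I R)"
    and \<rho>: "\<rho> \<in> ring_hom (prod_ring I R) (prod_ring I R)"
    and \<rho>_\<sigma>: "\<And>x. x \<in> carrier (prod_ring I R) \<Longrightarrow> \<rho> (\<sigma> x) = x"
    and \<sigma>_\<rho>: "\<And>x. x \<in> carrier (prod_ring I R) \<Longrightarrow> \<sigma> (\<rho> x) = x"
    and \<sigma>_idem: "\<sigma> (prin_idem I R i) = prin_idem I R j"
  shows "bij_betw (\<lambda>a. \<sigma> (coord_incl I R i a) j) (carrier (R i)) (carrier (R j))"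
proof (rule bij_betw_byWitness)
  have \<rho>_idem: "\<rho> (prin_idem I R j) = prin_idem I R i"
    using \<rho>_\<sigma>[OF prin_idem_closed[OF ij(1)]] \<sigma>_idem by simp
  have coord_closed: "\<tau> (coord_incl I R k a) l \<in> carrier (R l)"
    if "\<tau> \<in> ring_hom (prod_ring I R) (prod_ring I R)" "k \<in> I" "l \<in> I" "a \<in> carrier (R k)"
    for \<tau> k l a
    using ring_hom_closed[OF that(1) coord_incl_closed[OF that(2,4)]] that(3)
    by (auto simp: carrier_prod_ring)
  show "\<forall>a\<in>carrier (R i). \<rho> (coord_incl I R j (\<sigma> (coord_incl I R i a) j)) i = a"
  proof
    fix a assume a: "a \<in> carrier (R i)"
    have "coord_incl I R j (\<sigma> (coord_incl I R i a) j) = \<sigma> (coord_incl I R i a)"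
      by (rule ring_hom_coord_incl[OF ij \<sigma> \<sigma>_idem a, symmetric])
    then show "\<rho> (coord_incl I R j (\<sigma> (coord_incl I R i a) j)) i = a"
      using \<rho>_\<sigma>[OF coord_incl_closed[OF ij(1) a]] coord_incl_same[OF ij(1)] by simp
  qed
  show "\<forall>b\<in>carrier (R j). \<sigma> (coord_incl I R i (\<rho> (coord_incl I R j b) i)) j = b"
  proof
    fix b assume b: "b \<in> carrier (R j)"
    have "coord_incl I R i (\<rho> (coord_incl I R j b) i) = \<rho> (coord_incl I R j b)"
      by (rule ring_hom_coord_incl[OF ij(2,1) \<rho> \<rho>_idem b, symmetric])
    then show "\<sigma> (coord_incl I R i (\<rho> (coord_incl I R j b) i)) j = b"
      using \<sigma>_\<rho>[OF coord_incl_closed[OF ij(2) b]] coord_incl_same[OF ij(2)] by simp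
  qed
  show "(\<lambda>a. \<sigma> (coord_incl I R i a) j) ` carrier (R i) \<subseteq> carrier (R j)"
    using coord_closed[OF \<sigma> ij] by auto
  show "(\<lambda>b. \<rho> (coord_incl I R j b) i) ` carrier (R j) \<subseteq> carrier (R i)"
    using coord_closed[OF \<rho> ij(2,1)] by auto
qed

end

locale prod_module = ring_family I R + M: module "prod_ring I R" M
  for I :: "'i set" and R :: "'i \<Rightarrow> 'a ring" and M :: "('i \<Rightarrow> 'a, 'm) module"
begin

lemma prin_idem_smult_smult:
  assumes j: "j \<in> I" and c: "c \<in> carrier (prod_ring I R)" and x: "x \<in> carrier M"
  shows "prin_idem I R j \<odot>\<^bsub>M\<^esub> (c \<odot>\<^bsub>M\<^esub> x) = coord_incl I R j (c j) \<odot>\<^bsub>M\<^esub> (prin_idem I R j \<odot>\<^bsub>M\<^esub> x)"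
proof -
  have cj: "c j \<in> carrier (R j)" using c j by (auto simp: carrier_prod_ring)
  have "prin_idem I R j \<odot>\<^bsub>M\<^esub> (c \<odot>\<^bsub>M\<^esub> x) = (prin_idem I R j \<otimes>\<^bsub>prod_ring I R\<^esub> c) \<odot>\<^bsub>M\<^esub> x"
    using M.smult_assoc1[OF prin_idem_closed[OF j] c x] by simp
  also have "prin_idem I R j \<otimes>\<^bsub>prod_ring I R\<^esub> c
      = coord_incl I R j (c j) \<otimes>\<^bsub>prod_ring I R\<^esub> prin_idem I R j"
    using prin_idem_mult_left[OF j c] prin_idem_mult_right[OF j coord_incl_closed[OF j cj]]
    by (simp add: coord_incl_same[OF j])
  also have "(coord_incl I R j (c j) \<otimes>\<^bsub>prod_ring I R\<^esub> prin_idem I R j) \<odot>\<^bsub>M\<^esub> x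
      = coord_incl I R j (c j) \<odot>\<^bsub>M\<^esub> (prin_idem I R j \<odot>\<^bsub>M\<^esub> x)"
    by (rule M.smult_assoc1[OF coord_incl_closed[OF j cj] prin_idem_closed[OF j] x])
  finally show ?thesis .
qed

lemma prin_idem_smult_lincomb:
  assumes j: "j \<in> I" and fin: "finite B" and c: "c \<in> B \<rightarrow> carrier (prod_ring I R)" and x: "x \<in> B \<rightarrow> carrier M"
  shows "prin_idem I R j \<odot>\<^bsub>M\<^esub> (\<Oplus>\<^bsub>M\<^esub>b\<in>B. c b \<odot>\<^bsub>M\<^esub> x b)
    = (\<Oplus>\<^bsub>M\<^esub>b\<in>B. coord_incl I R j (c b j) \<odot>\<^bsub>M\<^esub> (prin_idem I R j \<odot>\<^bsub>M\<^esub> x b))"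
proof -
  have "c b j \<in> carrier (R j)" if "b \<in> B" for b
    using c j that by (auto simp: carrier_prod_ring)
  then have terms: "(\<lambda>b. coord_incl I R j (c b j) \<odot>\<^bsub>M\<^esub> (prin_idem I R j \<odot>\<^bsub>M\<^esub> x b)) \<in> B \<rightarrow> carrier M"
    using x coord_incl_closed[OF j] prin_idem_closed[OF j] by auto
  have "prin_idem I R j \<odot>\<^bsub>M\<^esub> (\<Oplus>\<^bsub>M\<^esub>b\<in>B. c b \<odot>\<^bsub>M\<^esub> x b)
      = (\<Oplus>\<^bsub>M\<^esub>b\<in>B. prin_idem I R j \<odot>\<^bsub>M\<^esub> (c b \<odot>\<^bsub>M\<^esub> x b))"
    using fin c x by (intro M.finsum_smult_ldistr prin_idem_closed[OF j]) auto
  also have "\<dots> = (\<Oplus>\<^bsub>M\<^esub>b\<in>B. coord_incl I R j (c b j) \<odot>\<^bsub>M\<^esub> (prin_idem I R j \<odot>\<^bsub>M\<^esub> x b))"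
    using c x terms by (intro M.finsum_cong') (auto intro!: prin_idem_smult_smult[OF j])
  finally show ?thesis .
qed

context
  fixes B :: "'b set" and w :: "'i \<Rightarrow> 'b \<Rightarrow> 'm" and \<beta> :: "'b \<Rightarrow> 'm"
  assumes components_inj: "inj_on (\<lambda>m. \<lambda>j\<in>I. prin_idem I R j \<odot>\<^bsub>M\<^esub> m) (carrier M)"
    and fin: "finite B"
    and component_bases: "\<And>j. j \<in> I \<Longrightarrow> basis_family (R j) (\<lambda>a x. coord_incl I R j a \<odot>\<^bsub>M\<^esub> x) M
                  ((\<lambda>m. prin_idem I R j \<odot>\<^bsub>M\<^esub> m) ` carrier M) B (w j)"
    and \<beta>_closed: "\<beta> \<in> B \<rightarrow> carrier M"
    and \<beta>_components: "\<And>b j. b \<in> B \<Longrightarrow> j \<in> I \<Longrightarrow> prin_idem I R j \<odot>\<^bsub>M\<^esub> \<beta> b = w j b"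
begin

lemma prin_idem_smult_lincomb_components:
  assumes j: "j \<in> I" and c: "c \<in> B \<rightarrow> carrier (prod_ring I R)"
  shows "prin_idem I R j \<odot>\<^bsub>M\<^esub> (\<Oplus>\<^bsub>M\<^esub>b\<in>B. c b \<odot>\<^bsub>M\<^esub> \<beta> b)
    = (\<Oplus>\<^bsub>M\<^esub>b\<in>B. coord_incl I R j (restrict (\<lambda>b. c b j) B b) \<odot>\<^bsub>M\<^esub> w j b)"
proof -
  have "c b j \<in> carrier (R j)" "w j b \<in> carrier M" if "b \<in> B" for b
    using c \<beta>_closed j that \<beta>_components[OF that j, symmetric] prin_idem_closed[OF j]
    by (auto simp: carrier_prod_ring)
  then show ?thesis
    unfolding prin_idem_smult_lincomb[OF j fin c \<beta>_closed]
    using \<beta>_components j coord_incl_closed[OF j] by (intro M.finsum_cong') auto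
qed

lemma lincomb_components_exists:
  assumes v: "v \<in> carrier M"
  shows "\<exists>c. c \<in> B \<rightarrow>\<^sub>E carrier (prod_ring I R) \<and> v = (\<Oplus>\<^bsub>M\<^esub>b\<in>B. c b \<odot>\<^bsub>M\<^esub> \<beta> b)"
proof -
  have "\<forall>j\<in>I. \<exists>a. a \<in> B \<rightarrow>\<^sub>E carrier (R j) \<and>
      prin_idem I R j \<odot>\<^bsub>M\<^esub> v = (\<Oplus>\<^bsub>M\<^esub>b\<in>B. coord_incl I R j (a b) \<odot>\<^bsub>M\<^esub> w j b)"
    using basis_family_unique_coeffs[OF component_bases] v by blast
  then obtain a where a: "\<And>j. j \<in> I \<Longrightarrow> a j \<in> B \<rightarrow>\<^sub>E carrier (R j)"
    and v_components: "\<And>j. j \<in> I \<Longrightarrow>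
      prin_idem I R j \<odot>\<^bsub>M\<^esub> v = (\<Oplus>\<^bsub>M\<^esub>b\<in>B. coord_incl I R j (a j b) \<odot>\<^bsub>M\<^esub> w j b)"
    by metis
  define c where "c = (\<lambda>b\<in>B. \<lambda>j\<in>I. a j b)"
  have "a j b \<in> carrier (R j)" if "j \<in> I" "b \<in> B" for j b
    by (rule PiE_mem[OF a[OF that(1)] that(2)])
  then have c: "c \<in> B \<rightarrow>\<^sub>E carrier (prod_ring I R)"
    by (auto simp: c_def carrier_prod_ring)
  have "v = (\<Oplus>\<^bsub>M\<^esub>b\<in>B. c b \<odot>\<^bsub>M\<^esub> \<beta> b)"
  proof (rule inj_onD[OF components_inj _ v], intro restrict_ext)
    show "(\<Oplus>\<^bsub>M\<^esub>b\<in>B. c b \<odot>\<^bsub>M\<^esub> \<beta> b) \<in> carrier M"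
      using c \<beta>_closed by (auto intro!: M.finsum_closed)
    fix j assume j: "j \<in> I"
    have c_j: "restrict (\<lambda>b. c b j) B = a j"
      using a[OF j] j by (auto simp: c_def PiE_iff extensional_def)
    have "c \<in> B \<rightarrow> carrier (prod_ring I R)" using c by auto
    then have "prin_idem I R j \<odot>\<^bsub>M\<^esub> (\<Oplus>\<^bsub>M\<^esub>b\<in>B. c b \<odot>\<^bsub>M\<^esub> \<beta> b)
        = (\<Oplus>\<^bsub>M\<^esub>b\<in>B. coord_incl I R j (a j b) \<odot>\<^bsub>M\<^esub> w j b)"
      by (subst prin_idem_smult_lincomb_components[OF j]) (simp_all only: c_j)
    with v_components[OF j]
    show "prin_idem I R j \<odot>\<^bsub>M\<^esub> v = prin_idem I R j \<odot>\<^bsub>M\<^esub> (\<Oplus>\<^bsub>M\<^esub>b\<in>B. c b \<odot>\<^bsub>M\<^esub> \<beta> b)"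
      by simp
  qed
  with c show ?thesis by blast
qed

lemma lincomb_components_unique:
  assumes c1: "c1 \<in> B \<rightarrow>\<^sub>E carrier (prod_ring I R)" and c2: "c2 \<in> B \<rightarrow>\<^sub>E carrier (prod_ring I R)"
    and eq: "(\<Oplus>\<^bsub>M\<^esub>b\<in>B. c1 b \<odot>\<^bsub>M\<^esub> \<beta> b) = (\<Oplus>\<^bsub>M\<^esub>b\<in>B. c2 b \<odot>\<^bsub>M\<^esub> \<beta> b)"
  shows "c1 = c2"
proof -
  let ?v = "(\<Oplus>\<^bsub>M\<^esub>b\<in>B. c1 b \<odot>\<^bsub>M\<^esub> \<beta> b)"
  have "restrict (\<lambda>b. c1 b j) B = restrict (\<lambda>b. c2 b j) B" if j: "j \<in> I" for j
  proof -
    have "?v \<in> carrier M"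
      using c1 \<beta>_closed by (auto intro!: M.finsum_closed)
    then have component: "prin_idem I R j \<odot>\<^bsub>M\<^esub> ?v \<in> (\<lambda>m. prin_idem I R j \<odot>\<^bsub>M\<^esub> m) ` carrier M"
      by blast
    have rep: "restrict (\<lambda>b. c b j) B \<in> B \<rightarrow>\<^sub>E carrier (R j) \<and>
        prin_idem I R j \<odot>\<^bsub>M\<^esub> ?v = (\<Oplus>\<^bsub>M\<^esub>b\<in>B. coord_incl I R j (restrict (\<lambda>b. c b j) B b) \<odot>\<^bsub>M\<^esub> w j b)"
      if c: "c \<in> B \<rightarrow>\<^sub>E carrier (prod_ring I R)"
        and v_eq: "?v = (\<Oplus>\<^bsub>M\<^esub>b\<in>B. c b \<odot>\<^bsub>M\<^esub> \<beta> b)" for c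
    proof
      show "restrict (\<lambda>b. c b j) B \<in> B \<rightarrow>\<^sub>E carrier (R j)"
        using c j by (auto simp: carrier_prod_ring)
      have "c \<in> B \<rightarrow> carrier (prod_ring I R)" using c by auto
      then show "prin_idem I R j \<odot>\<^bsub>M\<^esub> ?v
          = (\<Oplus>\<^bsub>M\<^esub>b\<in>B. coord_incl I R j (restrict (\<lambda>b. c b j) B b) \<odot>\<^bsub>M\<^esub> w j b)"
        unfolding v_eq by (rule prin_idem_smult_lincomb_components[OF j])
    qed
    show ?thesis
      using basis_family_unique_coeffs[OF component_bases[OF j] component] rep[OF c1 refl] rep[OF c2 eq]
      unfolding Ex1_def by blast
  qed
  then have coeff_eq: "c1 b j = c2 b j" if "b \<in> B" "j \<in> I" for b j
    using that by (metis restrict_apply')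
  have "c1 b = c2 b" if b: "b \<in> B" for b
  proof (rule PiE_ext)
    show "c1 b \<in> (\<Pi>\<^sub>E j\<in>I. carrier (R j))" "c2 b \<in> (\<Pi>\<^sub>E j\<in>I. carrier (R j))"
      using c1 c2 b by (auto simp: carrier_prod_ring)
  qed (use coeff_eq b in blast)
  then show "c1 = c2"
    using c1 c2 by (intro PiE_ext[of _ B]) auto
qed

lemma basis_family_of_components: "basis_family (prod_ring I R) (smult M) M (carrier M) B \<beta>"
  unfolding basis_family_def
proof (intro conjI ballI ex_ex1I)
  fix v assume "v \<in> carrier M"
  then show "\<exists>c. c \<in> B \<rightarrow>\<^sub>E carrier (prod_ring I R) \<and> v = (\<Oplus>\<^bsub>M\<^esub>b\<in>B. c b \<odot>\<^bsub>M\<^esub> \<beta> b)"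
    by (rule lincomb_components_exists)
  fix c1 c2
  assume "c1 \<in> B \<rightarrow>\<^sub>E carrier (prod_ring I R) \<and> v = (\<Oplus>\<^bsub>M\<^esub>b\<in>B. c1 b \<odot>\<^bsub>M\<^esub> \<beta> b)"
    and "c2 \<in> B \<rightarrow>\<^sub>E carrier (prod_ring I R) \<and> v = (\<Oplus>\<^bsub>M\<^esub>b\<in>B. c2 b \<odot>\<^bsub>M\<^esub> \<beta> b)"
  then show "c1 = c2"
    by (intro lincomb_components_unique) auto
qed (rule \<beta>_closed)

end

lemma free_finite_rank_from_components:
  assumes nat_iso: "bij_betw (\<lambda>m. \<lambda>j\<in>I. prin_idem I R j \<odot>\<^bsub>M\<^esub> m) (carrier M)
           (\<Pi>\<^sub>E j\<in>I. (\<lambda>m. prin_idem I R j \<odot>\<^bsub>M\<^esub> m) ` carrier M)"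
    and fin: "finite B"
    and basis: "\<And>j. j \<in> I \<Longrightarrow> basis_family (R j) (\<lambda>a x. coord_incl I R j a \<odot>\<^bsub>M\<^esub> x) M
                  ((\<lambda>m. prin_idem I R j \<odot>\<^bsub>M\<^esub> m) ` carrier M) B (w j)"
    and i: "i \<in> I" and inj: "inj_on (w i) B"
  shows "free_finite_rank (prod_ring I R) M"
proof -
  have "\<exists>m\<in>carrier M. \<forall>j\<in>I. prin_idem I R j \<odot>\<^bsub>M\<^esub> m = w j b" if b: "b \<in> B" for b
  proof -
    have "(\<lambda>j\<in>I. w j b) \<in> (\<Pi>\<^sub>E j\<in>I. (\<lambda>m. prin_idem I R j \<odot>\<^bsub>M\<^esub> m) ` carrier M)"
      using basis_family_closed[OF basis] b by auto
    then obtain m where "m \<in> carrier M" "(\<lambda>j\<in>I. prin_idem I R j \<odot>\<^bsub>M\<^esub> m) = (\<lambda>j\<in>I. w j b)"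
      using nat_iso unfolding bij_betw_def by (metis (no_types, lifting) imageE)
    then show ?thesis by (metis restrict_apply')
  qed
  then obtain \<beta> where "\<forall>b\<in>B. \<beta> b \<in> carrier M \<and> (\<forall>j\<in>I. prin_idem I R j \<odot>\<^bsub>M\<^esub> \<beta> b = w j b)"
    using bchoice[of B "\<lambda>b m. m \<in> carrier M \<and> (\<forall>j\<in>I. prin_idem I R j \<odot>\<^bsub>M\<^esub> m = w j b)"] by blast
  then have \<beta>: "\<beta> \<in> B \<rightarrow> carrier M"
    and \<beta>_components: "\<And>b j. b \<in> B \<Longrightarrow> j \<in> I \<Longrightarrow> prin_idem I R j \<odot>\<^bsub>M\<^esub> \<beta> b = w j b"
    by auto
  have "inj_on \<beta> B"
    using inj \<beta>_components[OF _ i] by (metis inj_on_def)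
  moreover have "basis_family (prod_ring I R) (smult M) M (carrier M) B \<beta>"
    using basis_family_of_components[OF _ fin basis \<beta> \<beta>_components] nat_iso
    by (simp add: bij_betw_def)
  ultimately have "finite_basis (prod_ring I R) (smult M) M (carrier M) (\<beta> ` B)"
    using fin by (intro finite_basis_image[OF M.abelian_monoid_axioms]) auto
  then show ?thesis
    unfolding free_finite_rank_def by blast
qed

end

text \<open>A module over the skew group ring \<open>L \<rtimes> G\<close>, for \<open>L = \<Prod>\<^sub>i R i\<close>: an \<open>L\<close>-module with an
  additive \<open>G\<close>-action that is semilinear along the action of \<open>G\<close> on \<open>L\<close>.\<close>

locale skew_group_module = prod_module I R M + G: group G
  + L_act: group_action G "carrier (prod_ring I R)" \<phi> + M_act: group_action G "carrier M" \<psi>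
  for I :: "'i set" and R :: "'i \<Rightarrow> 'a ring" and M :: "('i \<Rightarrow> 'a, 'm) module"
    and G :: "'g monoid" and \<phi> :: "'g \<Rightarrow> ('i \<Rightarrow> 'a) \<Rightarrow> ('i \<Rightarrow> 'a)" and \<psi> :: "'g \<Rightarrow> 'm \<Rightarrow> 'm" +
  assumes ring_aut: "g \<in> carrier G \<Longrightarrow> \<phi> g \<in> ring_hom (prod_ring I R) (prod_ring I R)"
    and act_M_add: "\<lbrakk>g \<in> carrier G; x \<in> carrier M; y \<in> carrier M\<rbrakk> \<Longrightarrow>
           \<psi> g (x \<oplus>\<^bsub>M\<^esub> y) = \<psi> g x \<oplus>\<^bsub>M\<^esub> \<psi> g y"
    and act_M_semilin: "\<lbrakk>g \<in> carrier G; a \<in> carrier (prod_ring I R); x \<in> carrier M\<rbrakk> \<Longrightarrow>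
           \<psi> g (a \<odot>\<^bsub>M\<^esub> x) = \<phi> g a \<odot>\<^bsub>M\<^esub> \<psi> g x"
begin

lemma act_image_component:
  assumes g: "g \<in> carrier G" and i: "i \<in> I" and g_idem: "\<phi> g (prin_idem I R i) = prin_idem I R j"
  shows "\<psi> g ` (\<lambda>m. prin_idem I R i \<odot>\<^bsub>M\<^esub> m) ` carrier M = (\<lambda>m. prin_idem I R j \<odot>\<^bsub>M\<^esub> m) ` carrier M"
proof -
  have "\<psi> g (prin_idem I R i \<odot>\<^bsub>M\<^esub> m) = prin_idem I R j \<odot>\<^bsub>M\<^esub> \<psi> g m" if "m \<in> carrier M" for m
    using act_M_semilin[OF g prin_idem_closed[OF i] that] g_idem by simp
  then have "\<psi> g ` (\<lambda>m. prin_idem I R i \<odot>\<^bsub>M\<^esub> m) ` carrier M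
      = (\<lambda>m. prin_idem I R j \<odot>\<^bsub>M\<^esub> m) ` \<psi> g ` carrier M"
    by (auto simp: image_image intro!: image_cong)
  then show ?thesis
    using M_act.surj_prop[OF g] by simp
qed

lemma basis_family_act:
  assumes g: "g \<in> carrier G" and ij: "i \<in> I" "j \<in> I"
    and g_idem: "\<phi> g (prin_idem I R i) = prin_idem I R j"
    and basis: "basis_family (R i) (\<lambda>a x. coord_incl I R i a \<odot>\<^bsub>M\<^esub> x) M
                  ((\<lambda>m. prin_idem I R i \<odot>\<^bsub>M\<^esub> m) ` carrier M) B w"
  shows "basis_family (R j) (\<lambda>a x. coord_incl I R j a \<odot>\<^bsub>M\<^esub> x) M
           ((\<lambda>m. prin_idem I R j \<odot>\<^bsub>M\<^esub> m) ` carrier M) B (\<lambda>b. \<psi> g (w b))"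
proof (rule basis_family_semilinear_image[OF M.abelian_group_axioms _ M_act.inj_prop[OF g] act_M_add[OF g]
      _ act_image_component[OF g ij(1) g_idem] _ _ _ basis])
  let ?f = "\<lambda>a. \<phi> g (coord_incl I R i a) j"
  have inv_g: "inv\<^bsub>G\<^esub> g \<in> carrier G" using g by simp
  have "\<phi> (inv\<^bsub>G\<^esub> g) (\<phi> g x) = x" "\<phi> g (\<phi> (inv\<^bsub>G\<^esub> g) x) = x"
    if "x \<in> carrier (prod_ring I R)" for x
    using L_act.orbit_sym_aux[OF g that refl] L_act.orbit_sym_aux[OF inv_g that refl] g by auto
  then show "bij_betw ?f (carrier (R i)) (carrier (R j))"
    by (rule bij_betw_coord_transfer[OF ij ring_aut[OF g] ring_aut[OF inv_g] _ _ g_idem])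
  show component_closed: "(\<lambda>m. prin_idem I R i \<odot>\<^bsub>M\<^esub> m) ` carrier M \<subseteq> carrier M"
    using prin_idem_closed[OF ij(1)] by auto
  show "\<psi> g \<in> carrier M \<rightarrow> carrier M"
    using M_act.element_image[OF g] by auto
  show "coord_incl I R i a \<odot>\<^bsub>M\<^esub> x \<in> carrier M"
    if "a \<in> carrier (R i)" "x \<in> (\<lambda>m. prin_idem I R i \<odot>\<^bsub>M\<^esub> m) ` carrier M" for a x
    using that component_closed coord_incl_closed[OF ij(1)] by auto
  show "\<psi> g (coord_incl I R i a \<odot>\<^bsub>M\<^esub> x) = coord_incl I R j (?f a) \<odot>\<^bsub>M\<^esub> \<psi> g x"
    if a: "a \<in> carrier (R i)" and x: "x \<in> (\<lambda>m. prin_idem I R i \<odot>\<^bsub>M\<^esub> m) ` carrier M" for a x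
  proof -
    have "\<psi> g (coord_incl I R i a \<odot>\<^bsub>M\<^esub> x) = \<phi> g (coord_incl I R i a) \<odot>\<^bsub>M\<^esub> \<psi> g x"
      using x component_closed by (intro act_M_semilin[OF g coord_incl_closed[OF ij(1) a]]) auto
    also have "\<phi> g (coord_incl I R i a) = coord_incl I R j (?f a)"
      by (rule ring_hom_coord_incl[OF ij ring_aut[OF g] g_idem a])
    finally show ?thesis .
  qed
qed

end

theorem lemma2p4:
  fixes I :: "'i set" and R :: "'i \<Rightarrow> 'a ring"
    and G :: "'g monoid" and \<phi> :: "'g \<Rightarrow> ('i \<Rightarrow> 'a) \<Rightarrow> ('i \<Rightarrow> 'a)"
    and M :: "('i \<Rightarrow> 'a, 'm) module" and \<psi> :: "'g \<Rightarrow> 'm \<Rightarrow> 'm"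
  assumes fields: "\<And>i. i \<in> I \<Longrightarrow> field (R i)"
    and grp: "group G"
    and act_L: "group_action G (carrier (prod_ring I R)) \<phi>"
    and ring_aut: "\<And>g. g \<in> carrier G \<Longrightarrow> \<phi> g \<in> ring_hom (prod_ring I R) (prod_ring I R)"
    and transitive: "\<And>i j. \<lbrakk>i \<in> I; j \<in> I\<rbrakk> \<Longrightarrow>
           \<exists>g\<in>carrier G. \<phi> g (prin_idem I R i) = prin_idem I R j"
    and M_mod: "module (prod_ring I R) M"
    and act_M: "group_action G (carrier M) \<psi>"
    and act_M_add: "\<And>g x y. \<lbrakk>g \<in> carrier G; x \<in> carrier M; y \<in> carrier M\<rbrakk> \<Longrightarrow>
           \<psi> g (x \<oplus>\<^bsub>M\<^esub> y) = \<psi> g x \<oplus>\<^bsub>M\<^esub> \<psi> g y"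
    and act_M_semilin: "\<And>g a x. \<lbrakk>g \<in> carrier G; a \<in> carrier (prod_ring I R); x \<in> carrier M\<rbrakk> \<Longrightarrow>
           \<psi> g (a \<odot>\<^bsub>M\<^esub> x) = \<phi> g a \<odot>\<^bsub>M\<^esub> \<psi> g x"
    and nat_iso: "bij_betw (\<lambda>m. \<lambda>i\<in>I. prin_idem I R i \<odot>\<^bsub>M\<^esub> m) (carrier M)
           (\<Pi>\<^sub>E i\<in>I. (\<lambda>m. prin_idem I R i \<odot>\<^bsub>M\<^esub> m) ` carrier M)"
    and fin_dim: "\<exists>i\<in>I. \<exists>B. finite_basis (R i) (\<lambda>a x. coord_incl I R i a \<odot>\<^bsub>M\<^esub> x) M
           ((\<lambda>m. prin_idem I R i \<odot>\<^bsub>M\<^esub> m) ` carrier M) B"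
  shows "free_finite_rank (prod_ring I R) M"
proof -
  have "skew_group_module I R M G \<phi> \<psi>"
    using fields M_mod grp act_L act_M ring_aut act_M_add act_M_semilin
    by (intro skew_group_module.intro prod_module.intro ring_family.intro skew_group_module_axioms.intro)
      (auto intro: field.is_ring)
  then interpret skew_group_module I R M G \<phi> \<psi> .
  obtain i B where i: "i \<in> I"
    and B: "finite_basis (R i) (\<lambda>a x. coord_incl I R i a \<odot>\<^bsub>M\<^esub> x) M
              ((\<lambda>m. prin_idem I R i \<odot>\<^bsub>M\<^esub> m) ` carrier M) B"
    using fin_dim by blast
  obtain g where g: "\<And>j. j \<in> I \<Longrightarrow> g j \<in> carrier G \<and> \<phi> (g j) (prin_idem I R i) = prin_idem I R j"
  proof -
    have "\<forall>j\<in>I. \<exists>g. g \<in> carrier G \<and> \<phi> g (prin_idem I R i) = prin_idem I R j"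
      using transitive[OF i] by blast
    then show ?thesis
      using that by (metis bchoice)
  qed
  have bases: "basis_family (R j) (\<lambda>a x. coord_incl I R j a \<odot>\<^bsub>M\<^esub> x) M
      ((\<lambda>m. prin_idem I R j \<odot>\<^bsub>M\<^esub> m) ` carrier M) B (\<lambda>b. \<psi> (g j) b)" if j: "j \<in> I" for j
    using g[OF j] by (intro basis_family_act[OF _ i j _ basis_family_of_finite_basis[OF B]]) auto
  have "B \<subseteq> carrier M"
    using B prin_idem_closed[OF i] by (auto simp: finite_basis_def)
  then have "inj_on (\<psi> (g i)) B"
    using M_act.inj_prop g[OF i] inj_on_subset by blast
  moreover have "finite B"
    using B by (simp add: finite_basis_def)
  ultimately show ?thesis
    using free_finite_rank_from_components[OF nat_iso _ bases i] by blast
qed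

end
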